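(* Let $A:[1,\infty)\to\mathbb R^{d\times d}$ be continuous with evolution family $T(t,s)$ for $x'=A(t)x$, and let $\|\cdot\|$ be a norm on $\mathbb R^d$. The following are equivalent: (1) $x'=A(t)x$ admits a nonuniform strong polynomial dichotomy; (2) there is a family of norms $\mathcal S=\{\|\cdot\|_t;\ t\ge1\}$ on $\mathbb R^d$ such that $x'=A(t)x$ admits a strong polynomial dichotomy with respect to $\mathcal S$ and there exist $C>0$, $\delta\ge0$ with $\|x\|\le\|x\|_t\le Ct^\delta\|x\|$ for all $x\in\mathbb R^d$, $t\ge1$.
   Context: Nonuniform strong polynomial dichotomy: there exist $K>0$, $a\ge\lambda>0$, $\varepsilon\ge0$ and projections $P(t)$, $t\ge1$, with $P(t)T(t,s)=T(t,s)P(s)$ for $t\ge s\ge1$ and, for $t\ge s\ge1$, $Q(t)=\mathrm{Id}-P(t)$: $\|T(t,s)P(s)\|\le K(t/s)^{-\lambda}s^\varepsilon$, $\|T(s,t)Q(t)\|\le K(t/s)^{-\lambda}t^\varepsilon$, $\|T(t,s)\|\le K(t/s)^as^\varepsilon$, $\|T(s,t)\|\le K(t/s)^at^\varepsilon$. Strong polynomial dichotomy w.r.t. $\{\|\cdot\|_t\}$: there exist $K>0$, $a\ge\lambda>0$ and projections $P(t)$ with $P(t)T(t,s)=T(t,s)P(s)$ and, for $t\ge s\ge1$, $x\in\mathbb R^d$: $\|T(t,s)P(s)x\|_t\le K(t/s)^{-\lambda}\|x\|_s$, $\|T(s,t)Q(t)x\|_s\le K(t/s)^{-\lambda}\|x\|_t$,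 $\|T(t,s)x\|_t\le K(t/s)^a\|x\|_s$, $\|T(s,t)x\|_s\le K(t/s)^a\|x\|_t$. *)

theory Defs
  imports "HOL-Analysis.Analysis"
begin

definition is_norm :: "(real ^ 'd \<Rightarrow> real) \<Rightarrow> bool" where
  "is_norm N \<longleftrightarrow> (\<forall>x. 0 \<le> N x) \<and> (\<forall>x. N x = 0 \<longleftrightarrow> x = 0)
     \<and> (\<forall>c x. N (c *\<^sub>R x) = \<bar>c\<bar> * N x) \<and> (\<forall>x y. N (x + y) \<le> N x + N y)"

definition op_norm :: "(real ^ 'd \<Rightarrow> real) \<Rightarrow> real ^ 'd ^ 'd \<Rightarrow> real" where
  "op_norm N M = Sup ((\<lambda>x. N (M *v x)) ` {x. N x \<le> 1})"

definition evolution_family ::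
  "(real \<Rightarrow> real ^ 'd ^ 'd) \<Rightarrow> (real \<Rightarrow> real \<Rightarrow> real ^ 'd ^ 'd) \<Rightarrow> bool" where
  "evolution_family A T \<longleftrightarrow>
     (\<forall>s\<ge>1. T s s = mat 1 \<and>
        (\<forall>t\<ge>1. ((\<lambda>\<tau>. T \<tau> s) has_vector_derivative (A t ** T t s)) (at t within {1..})))"

definition nonuniform_strong_poly_dichotomy ::
  "(real ^ 'd \<Rightarrow> real) \<Rightarrow> (real \<Rightarrow> real \<Rightarrow> real ^ 'd ^ 'd) \<Rightarrow> bool" where
  "nonuniform_strong_poly_dichotomy N T \<longleftrightarrow>
    (\<exists>K a lam \<epsilon> P. K > 0 \<and> a \<ge> lam \<and> lam > 0 \<and> \<epsilon> \<ge> 0 \<and>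
      (\<forall>t\<ge>1. P t ** P t = P t) \<and>
      (\<forall>t s. 1 \<le> s \<and> s \<le> t \<longrightarrow>
         P t ** T t s = T t s ** P s \<and>
         op_norm N (T t s ** P s) \<le> K * (t / s) powr (- lam) * s powr \<epsilon> \<and>
         op_norm N (T s t ** (mat 1 - P t)) \<le> K * (t / s) powr (- lam) * t powr \<epsilon> \<and>
         op_norm N (T t s) \<le> K * (t / s) powr a * s powr \<epsilon> \<and>
         op_norm N (T s t) \<le> K * (t / s) powr a * t powr \<epsilon>))"

definition strong_poly_dichotomy_wrt ::
  "(real \<Rightarrow> real ^ 'd \<Rightarrow> real) \<Rightarrow> (real \<Rightarrow> real \<Rightarrow> real ^ 'd ^ 'd) \<Rightarrow> bool" where
  "strong_poly_dichotomy_wrt S T \<longleftrightarrow>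
    (\<exists>K a lam P. K > 0 \<and> a \<ge> lam \<and> lam > 0 \<and>
      (\<forall>t\<ge>1. P t ** P t = P t) \<and>
      (\<forall>t s. 1 \<le> s \<and> s \<le> t \<longrightarrow>
         P t ** T t s = T t s ** P s \<and>
         (\<forall>x. S t (T t s ** P s *v x) \<le> K * (t / s) powr (- lam) * S s x) \<and>
         (\<forall>x. S s (T s t ** (mat 1 - P t) *v x) \<le> K * (t / s) powr (- lam) * S t x) \<and>
         (\<forall>x. S t (T t s *v x) \<le> K * (t / s) powr a * S s x) \<and>
         (\<forall>x. S s (T s t *v x) \<le> K * (t / s) powr a * S t x)))"

end

theory Submission
  imports Defs
begin

(* (2) implies (1) by comparing norms: every estimate in the family of norms turns into one for
   the fixed norm at the price of a factor C s^delta or C t^delta.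

   For (1) implies (2), with Q = Id - P and the weight phi(r) = min(r^lam, r^a), take the Lyapunov norm
     |x|_t = sup_{tau >= 1} ( |T(tau,t) P(t) x| phi(tau/t) + |T(tau,t) Q(t) x| phi(t/tau) ).
   Choosing tau = t gives |x| <= |x|_t, and the nonuniform bounds give |x|_t <= 2K(1+K) t^(2 eps) |x|.
   By the cocycle identity T(tau,t) T(t,s) = T(tau,s), the norm of a vector moved from s to t is the
   same supremum with phi(tau/t), phi(t/tau) in place of phi(tau/s), phi(s/tau); since
   rho^lam phi(r) <= phi(rho r) <= rho^a phi(r) for rho >= 1, this yields the four dichotomy estimates
   with constant 1. The cocycle identity itself comes from uniqueness of solutions of x' = A(t) x,
   shown by a Gronwall argument for |x|^2. *)

section \<open>Norms on real vectors\<close>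

lemma is_normD:
  assumes "is_norm N"
  shows is_norm_nonneg: "0 \<le> N x"
    and is_norm_eq_0_iff: "N x = 0 \<longleftrightarrow> x = 0"
    and is_norm_scaleR: "N (c *\<^sub>R x) = \<bar>c\<bar> * N x"
    and is_norm_triangle: "N (x + y) \<le> N x + N y"
  using assms unfolding is_norm_def by auto

lemma is_norm_zero: "is_norm N \<Longrightarrow> N 0 = 0"
  by (simp add: is_norm_eq_0_iff)

lemma is_norm_minus_commute: "is_norm N \<Longrightarrow> N (x - y) = N (y - x)"
  using is_norm_scaleR[of N "-1" "y - x"] by simp

lemma is_norm_sum_le:
  assumes "is_norm N"
  shows "N (\<Sum>i\<in>I. f i) \<le> (\<Sum>i\<in>I. N (f i))"
proof (induction I rule: infinite_finite_induct)
  case (insert i I)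
  then show ?case using is_norm_triangle[OF assms, of "f i" "sum f I"] by simp
qed (simp_all add: is_norm_zero[OF assms])

lemma is_norm_le_norm:
  fixes N :: "real ^ 'd \<Rightarrow> real"
  assumes "is_norm N"
  obtains B where "B \<ge> 0" "\<And>x. N x \<le> B * norm x"
proof
  let ?B = "\<Sum>i\<in>UNIV. N (axis i (1::real) :: real ^ 'd)"
  show "?B \<ge> 0" by (intro sum_nonneg is_norm_nonneg[OF assms])
  fix x :: "real ^ 'd"
  have "N x = N (\<Sum>i\<in>UNIV. (x $ i) *\<^sub>R axis i 1)"
    using basis_expansion[of x] by (simp add: scalar_mult_eq_scaleR)
  also have "\<dots> \<le> (\<Sum>i\<in>UNIV. N ((x $ i) *\<^sub>R axis i 1))"
    by (rule is_norm_sum_le[OF assms])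
  also have "\<dots> = (\<Sum>i\<in>UNIV. \<bar>x $ i\<bar> * N (axis i 1))"
    by (simp add: is_norm_scaleR[OF assms])
  also have "\<dots> \<le> (\<Sum>i\<in>UNIV. norm x * N (axis i 1))"
    by (intro sum_mono mult_right_mono component_le_norm_cart is_norm_nonneg[OF assms])
  finally show "N x \<le> ?B * norm x" by (simp add: sum_distrib_left mult.commute)
qed

lemma is_norm_continuous:
  fixes N :: "real ^ 'd \<Rightarrow> real"
  assumes "is_norm N"
  shows "continuous_on S N"
proof -
  obtain B where "B \<ge> 0" and B: "\<And>x. N x \<le> B * norm x"
    using is_norm_le_norm[OF assms] by blast
  have "\<bar>N x - N y\<bar> \<le> B * dist x y" for x y
  proof -
    have "N x \<le> N y + N (x - y)" "N y \<le> N x + N (y - x)"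
      using is_norm_triangle[OF assms, of y "x - y"] is_norm_triangle[OF assms, of x "y - x"]
      by simp_all
    then show ?thesis
      using B[of "x - y"] is_norm_minus_commute[OF assms, of x y] by (simp add: dist_norm)
  qed
  then have "B-lipschitz_on S N"
    using \<open>B \<ge> 0\<close> by (intro lipschitz_onI) (simp_all add: dist_real_def)
  then show ?thesis by (rule lipschitz_on_continuous_on)
qed

lemma is_norm_ge_norm:
  fixes N :: "real ^ 'd \<Rightarrow> real"
  assumes "is_norm N"
  obtains c where "c > 0" "\<And>x. c * norm x \<le> N x"
proof -
  have "compact (sphere (0::real ^ 'd) 1)" "sphere (0::real ^ 'd) 1 \<noteq> {}"
    by simp_all
  then obtain x0 where x0: "x0 \<in> sphere 0 1" and min: "\<forall>y \<in> sphere 0 1. N x0 \<le> N y"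
    using continuous_attains_inf[OF _ _ is_norm_continuous[OF assms]] by blast
  have "N x0 * norm x \<le> N x" for x
  proof (cases "x = 0")
    case False
    then have "N x0 \<le> N ((1 / norm x) *\<^sub>R x)" using min by simp
    also have "\<dots> = N x / norm x" by (simp add: is_norm_scaleR[OF assms])
    finally show ?thesis using False by (simp add: pos_le_divide_eq)
  qed (simp add: is_norm_zero[OF assms])
  moreover have "x0 \<noteq> 0" using x0 by auto
  then have "N x0 > 0"
    using is_norm_nonneg[OF assms, of x0] is_norm_eq_0_iff[OF assms, of x0] by (simp add: less_le)
  ultimately show ?thesis using that by blast
qed

lemma op_norm_bound:
  fixes N :: "real ^ 'd \<Rightarrow> real"
  assumes "is_norm N"
  shows "N (M *v x) \<le> op_norm N M * N x"
proof -
  obtain c where "c > 0" and c: "\<And>x. c * norm x \<le> N x"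
    using is_norm_ge_norm[OF assms] by blast
  obtain B where "B \<ge> 0" and B: "\<And>x. N x \<le> B * norm x"
    using is_norm_le_norm[OF assms] by blast
  have M_bounded: "norm (M *v y) \<le> onorm ((*v) M) * norm y" for y
    by (rule onorm[OF matrix_vector_mul_bounded_linear])
  have "N (M *v y) \<le> B * (onorm ((*v) M) * (1 / c))" if "N y \<le> 1" for y
  proof -
    have "norm y \<le> 1 / c"
      using c[of y] that \<open>c > 0\<close> by (simp add: pos_le_divide_eq mult.commute)
    have "N (M *v y) \<le> B * (onorm ((*v) M) * norm y)"
      using B[of "M *v y"] mult_left_mono[OF M_bounded[of y] \<open>B \<ge> 0\<close>] by linarith
    also have "\<dots> \<le> B * (onorm ((*v) M) * (1 / c))"
      using \<open>B \<ge> 0\<close> \<open>norm y \<le> 1 / c\<close> onorm_pos_le[OF matrix_vector_mul_bounded_linear]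
      by (intro mult_left_mono)
    finally show ?thesis .
  qed
  then have bdd: "bdd_above ((\<lambda>x. N (M *v x)) ` {x. N x \<le> 1})"
    by (intro bdd_aboveI2) auto
  show ?thesis
  proof (cases "x = 0")
    case False
    then have "N x > 0"
      using is_norm_nonneg[OF assms, of x] is_norm_eq_0_iff[OF assms, of x] by (simp add: less_le)
    have "(1 / N x) *\<^sub>R x \<in> {x. N x \<le> 1}"
      using \<open>N x > 0\<close> by (simp add: is_norm_scaleR[OF assms])
    then have "N (M *v ((1 / N x) *\<^sub>R x)) \<le> op_norm N M"
      unfolding op_norm_def by (rule cSUP_upper[OF _ bdd])
    moreover have "N (M *v ((1 / N x) *\<^sub>R x)) = N (M *v x) / N x"
      using \<open>N x > 0\<close> by (simp add: matrix_vector_mult_scaleR is_norm_scaleR[OF assms])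
    ultimately show ?thesis using \<open>N x > 0\<close> by (simp add: divide_le_eq)
  qed (simp add: is_norm_zero[OF assms])
qed

lemma op_norm_le:
  fixes N :: "real ^ 'd \<Rightarrow> real"
  assumes "is_norm N" "B \<ge> 0" "\<And>x. N (M *v x) \<le> B * N x"
  shows "op_norm N M \<le> B"
  unfolding op_norm_def
proof (rule cSUP_least)
  have "0 \<in> {x. N x \<le> 1}" by (simp add: is_norm_zero[OF assms(1)])
  then show "{x. N x \<le> 1} \<noteq> {}" by blast
  fix x assume "x \<in> {x. N x \<le> 1}"
  then have "B * N x \<le> B" using mult_left_mono[OF _ assms(2), of "N x" 1] by simp
  then show "N (M *v x) \<le> B" using assms(3)[of x] by linarith
qed

section \<open>Linear differential equations\<close>

lemma exp_weighted_decreasing: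
  fixes f f' :: "real \<Rightarrow> real"
  assumes "a \<le> b" "continuous_on {a..b} f"
    and "\<And>u. a < u \<Longrightarrow> u < b \<Longrightarrow> (f has_real_derivative f' u) (at u)"
    and "\<And>u. a < u \<Longrightarrow> u < b \<Longrightarrow> f' u \<le> L * f u"
  shows "exp (- L * b) * f b \<le> exp (- L * a) * f a"
proof (rule DERIV_nonpos_imp_decreasing_open[OF assms(1)])
  fix u assume u: "a < u" "u < b"
  have "((\<lambda>u. exp (- L * u) * f u) has_real_derivative exp (- L * u) * (f' u - L * f u)) (at u)"
    using assms(3)[OF u] by (auto intro!: derivative_eq_intros simp: algebra_simps)
  moreover have "exp (- L * u) * (f' u - L * f u) \<le> 0"
    using assms(4)[OF u] by (simp add: mult_nonneg_nonpos)
  ultimately show "\<exists>y. ((\<lambda>u. exp (- L * u) * f u) has_real_derivative y) (at u) \<and> y \<le> 0"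
    by blast
qed (use assms(2) in \<open>intro continuous_intros\<close>)

lemma eq_0_if_abs_deriv_le:
  fixes f f' :: "real \<Rightarrow> real"
  assumes cont: "continuous_on {a..b} f"
    and f': "\<And>u. a < u \<Longrightarrow> u < b \<Longrightarrow> (f has_real_derivative f' u) (at u)"
    and bound: "\<And>u. a < u \<Longrightarrow> u < b \<Longrightarrow> \<bar>f' u\<bar> \<le> L * f u"
    and "s \<in> {a..b}" "t \<in> {a..b}" "f s = 0" "0 \<le> f t"
  shows "f t = 0"
proof -
  have "f t \<le> 0"
  proof (cases "s \<le> t")
    case True
    have "exp (- L * t) * f t \<le> exp (- L * s) * f s"
    proof (rule exp_weighted_decreasing[OF True])
      show "continuous_on {s..t} f"
        using assms(4,5) by (intro continuous_on_subset[OF cont]) auto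
      fix u assume "s < u" "u < t"
      then show "(f has_real_derivative f' u) (at u)" "f' u \<le> L * f u"
        using assms(4,5) f' bound[of u] by (auto simp: abs_le_iff)
    qed
    then show ?thesis using \<open>f s = 0\<close> by (simp add: mult_le_0_iff)
  next
    case False
    \<comment> \<open>backwards in time: the same estimate for \<open>- f\<close> with constant \<open>- L\<close>\<close>
    have "exp (- (- L) * s) * - f s \<le> exp (- (- L) * t) * - f t"
    proof (rule exp_weighted_decreasing[where f' = "\<lambda>u. - f' u"])
      show "t \<le> s" using False by simp
      show "continuous_on {t..s} (\<lambda>u. - f u)"
        using assms(4,5) by (intro continuous_on_minus continuous_on_subset[OF cont]) auto
      fix u assume "t < u" "u < s"
      then show "((\<lambda>u. - f u) has_real_derivative - f' u) (at u)" "- f' u \<le> - L * - f u"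
        using assms(4,5) f' bound[of u] by (auto intro: DERIV_minus simp: abs_le_iff)
    qed
    then show ?thesis using \<open>f s = 0\<close> by (simp add: mult_le_0_iff)
  qed
  with \<open>0 \<le> f t\<close> show ?thesis by simp
qed

lemma norm_matrix_vector_mult_le:
  fixes A :: "real ^ 'n ^ 'm"
  shows "norm (A *v x) \<le> real CARD('m) * real CARD('n) * norm A * norm x"
proof -
  have "\<bar>A $ i $ j\<bar> \<le> norm A" for i j
    using component_le_norm_cart[of "A $ i" j] Finite_Cartesian_Product.norm_nth_le[of A i] by linarith
  then have "onorm ((*v) A) \<le> real CARD('m) * real CARD('n) * norm A"
    by (rule onorm_le_matrix_component)
  then show ?thesis
    using onorm[OF matrix_vector_mul_bounded_linear, of A x] mult_right_mono[OF _ norm_ge_zero]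
    by (meson order_trans)
qed

lemma linear_ode_solution_eq_0:
  fixes A :: "real \<Rightarrow> real ^ 'd ^ 'd" and X :: "real \<Rightarrow> real ^ 'd"
  assumes contA: "continuous_on {1..} A"
    and X': "\<And>u. u \<ge> 1 \<Longrightarrow> (X has_vector_derivative A u *v X u) (at u within {1..})"
    and "t0 \<ge> 1" "X t0 = 0" "t \<ge> 1"
  shows "X t = 0"
proof -
  let ?I = "{1..max t t0}"
  have "bounded (A ` ?I)"
    by (intro compact_imp_bounded compact_continuous_image continuous_on_subset[OF contA]) auto
  then obtain M where "\<forall>B \<in> A ` ?I. norm B \<le> M"
    unfolding bounded_iff by blast
  then have M: "norm (A u) \<le> M" if "u \<in> ?I" for u
    using that by blast
  define L where "L = 2 * real CARD('d) * real CARD('d) * M"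
  define f where "f u = X u \<bullet> X u" for u
  define f' where "f' u = 2 * (X u \<bullet> (A u *v X u))" for u
  have f': "(f has_real_derivative f' u) (at u)" if "u > 1" for u
  proof -
    have "at u within {1..} = at u"
      using that by (intro at_within_interior) simp
    with X'[of u] that have "(X has_vector_derivative A u *v X u) (at u)" by simp
    from bounded_bilinear.has_vector_derivative[OF bounded_bilinear_inner this this]
    show ?thesis
      unfolding f_def f'_def has_real_derivative_iff_has_vector_derivative
      by (simp add: inner_commute[of _ "X u"])
  qed
  have f'_bound: "\<bar>f' u\<bar> \<le> L * f u" if "u \<in> ?I" for u
  proof -
    let ?c = "real CARD('d) * real CARD('d)"
    have "?c * norm (A u) * norm (X u) \<le> ?c * M * norm (X u)"
      using M[OF that] by (simp add: mult_right_mono)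
    then have "norm (A u *v X u) \<le> ?c * M * norm (X u)"
      using norm_matrix_vector_mult_le[of "A u" "X u"] by linarith
    then have "\<bar>X u \<bullet> (A u *v X u)\<bar> \<le> norm (X u) * (?c * M * norm (X u))"
      using Cauchy_Schwarz_ineq2[of "X u" "A u *v X u"] mult_left_mono[OF _ norm_ge_zero]
      by (meson order_trans)
    also have "\<dots> = ?c * M * (X u \<bullet> X u)"
      by (simp add: dot_square_norm power2_eq_square)
    finally show ?thesis
      by (simp add: f_def f'_def L_def abs_mult)
  qed
  have "continuous_on {1..} X"
    unfolding continuous_on_eq_continuous_within
    by (auto intro: has_vector_derivative_continuous X')
  then have "continuous_on ?I f"
    unfolding f_def by (auto intro!: continuous_on_inner elim!: continuous_on_subset)
  then have "f t = 0"
  proof (rule eq_0_if_abs_deriv_le[where s = t0 and t = t])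
    fix u assume "1 < u" "u < max t t0"
    then show "(f has_real_derivative f' u) (at u)" "\<bar>f' u\<bar> \<le> L * f u"
      using f' f'_bound by simp_all
  next
    show "t0 \<in> ?I" "t \<in> ?I" using \<open>t0 \<ge> 1\<close> \<open>t \<ge> 1\<close> by simp_all
    show "f t0 = 0" "0 \<le> f t" using \<open>X t0 = 0\<close> by (simp_all add: f_def)
  qed
  then show ?thesis by (simp add: f_def)
qed

lemma evolution_family_refl: "evolution_family A T \<Longrightarrow> t \<ge> 1 \<Longrightarrow> T t t = mat 1"
  unfolding evolution_family_def by blast

lemma evolution_family_cocycle:
  fixes A :: "real \<Rightarrow> real ^ 'd ^ 'd"
  assumes contA: "continuous_on {1..} A" and ev: "evolution_family A T"
    and "\<tau> \<ge> 1" "t \<ge> 1" "s \<ge> 1"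
  shows "T \<tau> t ** T t s = T \<tau> s"
proof -
  have apply_linear: "bounded_linear (\<lambda>M :: real ^ 'd ^ 'd. M *v v)" for v
    by (simp add: linear_conv_bounded_linear[symmetric] linear_iff
        matrix_vector_mult_add_rdistrib scaleR_matrix_vector_assoc)
  have solution: "((\<lambda>u. T u r *v v) has_vector_derivative A u *v (T u r *v v)) (at u within {1..})"
    if "r \<ge> 1" "u \<ge> 1" for r u v
  proof -
    have "((\<lambda>u. T u r) has_vector_derivative A u ** T u r) (at u within {1..})"
      using ev that unfolding evolution_family_def by blast
    from bounded_linear.has_vector_derivative[OF apply_linear this, of v]
    show ?thesis by (simp add: matrix_vector_mul_assoc)
  qed
  have "(T \<tau> t ** T t s) *v w = T \<tau> s *v w" for w
  proof -
    define X where "X u = T u t *v (T t s *v w) - T u s *v w" for u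
    have "X \<tau> = 0"
    proof (rule linear_ode_solution_eq_0[OF contA _ \<open>t \<ge> 1\<close> _ \<open>\<tau> \<ge> 1\<close>])
      show "(X has_vector_derivative A u *v X u) (at u within {1..})" if "u \<ge> 1" for u
        unfolding X_def using that assms(4,5)
        by (intro has_vector_derivative_eq_rhs[OF has_vector_derivative_diff[OF solution solution]])
           (simp_all add: matrix_vector_mult_diff_distrib)
      show "X t = 0"
        unfolding X_def using evolution_family_refl[OF ev \<open>t \<ge> 1\<close>] by simp
    qed
    then show ?thesis by (simp add: X_def matrix_vector_mul_assoc)
  qed
  then show ?thesis by (rule matrix_eq[THEN iffD2, rule_format])
qed

section \<open>The Lyapunov norm of a nonuniform dichotomy\<close>

definition poly_weight :: "real \<Rightarrow> real \<Rightarrow> real \<Rightarrow> real" where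
  "poly_weight lam a r = min (r powr lam) (r powr a)"

lemma poly_weight_nonneg: "0 \<le> poly_weight lam a r"
  by (simp add: poly_weight_def)

lemma poly_weight_one [simp]: "poly_weight lam a 1 = 1"
  by (simp add: poly_weight_def)

lemma poly_weight_le_powr: "poly_weight lam a r \<le> r powr lam" "poly_weight lam a r \<le> r powr a"
  by (simp_all add: poly_weight_def)

lemma poly_weight_mult_ge:
  assumes "lam \<le> a" "1 \<le> \<rho>" "0 < r"
  shows "\<rho> powr lam * poly_weight lam a r \<le> poly_weight lam a (\<rho> * r)"
proof -
  have "\<rho> powr lam \<le> \<rho> powr a" using assms by (intro powr_mono) auto
  then have "\<rho> powr lam * r powr a \<le> \<rho> powr a * r powr a"
    by (simp add: mult_right_mono)
  then show ?thesis
    using assms by (simp add: poly_weight_def powr_mult min_mult_distrib_left min.coboundedI2)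
qed

lemma poly_weight_mult_le:
  assumes "lam \<le> a" "1 \<le> \<rho>" "0 < r"
  shows "poly_weight lam a (\<rho> * r) \<le> \<rho> powr a * poly_weight lam a r"
proof -
  have "\<rho> powr lam \<le> \<rho> powr a" using assms by (intro powr_mono) auto
  then have "\<rho> powr lam * r powr lam \<le> \<rho> powr a * r powr lam"
    by (simp add: mult_right_mono)
  then show ?thesis
    using assms by (simp add: poly_weight_def powr_mult min_mult_distrib_left min.coboundedI1)
qed

lemma cSUP_le_mult:
  fixes f g :: "'i \<Rightarrow> real"
  assumes "I \<noteq> {}" "bdd_above (g ` I)" "0 \<le> c" "\<And>i. i \<in> I \<Longrightarrow> f i \<le> c * g i"
  shows "(SUP i\<in>I. f i) \<le> c * (SUP i\<in>I. g i)"
proof (rule cSUP_least[OF assms(1)])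
  fix i assume "i \<in> I"
  then have "c * g i \<le> c * (SUP i\<in>I. g i)"
    by (intro mult_left_mono cSUP_upper assms(2,3))
  with assms(4)[OF \<open>i \<in> I\<close>] show "f i \<le> c * (SUP i\<in>I. g i)" by linarith
qed

lemma cSUP_mult_left_real:
  fixes f :: "'i \<Rightarrow> real"
  assumes "I \<noteq> {}" "bdd_above (f ` I)" "0 \<le> c"
  shows "(SUP i\<in>I. c * f i) = c * (SUP i\<in>I. f i)"
proof -
  have "mono ((*) c)" using assms(3) by (simp add: mono_def mult_left_mono)
  then have "c * Sup (f ` I) = (SUP y\<in>f ` I. c * y)"
    using assms(1,2) by (intro continuous_at_Sup_mono) (auto intro: continuous_intros)
  then show ?thesis by (simp add: image_image)
qed

lemma is_norm_SUP:
  fixes N :: "real ^ 'd \<Rightarrow> real" and F :: "'i \<Rightarrow> real ^ 'd \<Rightarrow> real"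
  assumes "is_norm N" "I \<noteq> {}"
    and bdd: "\<And>x. bdd_above ((\<lambda>i. F i x) ` I)"
    and above: "\<And>x. \<exists>i\<in>I. N x \<le> F i x"
    and scaleR: "\<And>i c x. i \<in> I \<Longrightarrow> F i (c *\<^sub>R x) = \<bar>c\<bar> * F i x"
    and triangle: "\<And>i x y. i \<in> I \<Longrightarrow> F i (x + y) \<le> F i x + F i y"
  shows "is_norm (\<lambda>x. SUP i\<in>I. F i x)"
proof -
  have ge_N: "N x \<le> (SUP i\<in>I. F i x)" for x
    using above[of x] by (metis bdd cSUP_upper2)
  have hom: "(SUP i\<in>I. F i (c *\<^sub>R x)) = \<bar>c\<bar> * (SUP i\<in>I. F i x)" for c x
    using cSUP_mult_left_real[OF assms(2) bdd, of "\<bar>c\<bar>"] by (simp add: scaleR)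
  have "(SUP i\<in>I. F i (x + y)) \<le> (SUP i\<in>I. F i x) + (SUP i\<in>I. F i y)" for x y
  proof (rule cSUP_least[OF assms(2)])
    fix i assume "i \<in> I"
    then show "F i (x + y) \<le> (SUP i\<in>I. F i x) + (SUP i\<in>I. F i y)"
      using triangle[of i x y] cSUP_upper[OF _ bdd, of i x] cSUP_upper[OF _ bdd, of i y] by linarith
  qed
  moreover have "(SUP i\<in>I. F i x) = 0 \<longleftrightarrow> x = 0" for x
    using ge_N[of x] hom[of 0 0] is_norm_nonneg[OF assms(1), of x] is_norm_eq_0_iff[OF assms(1), of x]
    by auto
  moreover have "0 \<le> (SUP i\<in>I. F i x)" for x
    using ge_N[of x] is_norm_nonneg[OF assms(1), of x] by linarith
  ultimately show ?thesis
    unfolding is_norm_def using hom by blast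
qed

lemma mult_le_of_powr_bounds:
  fixes \<rho> :: real
  assumes "0 < \<rho>" "0 \<le> c" "0 \<le> w" "w \<le> \<rho> powr e" "n \<le> c * \<rho> powr (- e)"
  shows "n * w \<le> c"
proof -
  have "n * w \<le> c * \<rho> powr (- e) * w" using assms(5,3) by (rule mult_right_mono)
  also have "\<dots> \<le> c * \<rho> powr (- e) * \<rho> powr e"
    using assms(2,4) by (simp add: mult_left_mono)
  also have "\<dots> = c" using assms(1) by (simp add: powr_minus)
  finally show ?thesis .
qed

lemma divide_powr_flip: "(x / y) powr a = (y / x) powr (- a)" for x y :: real
  by (simp add: powr_divide powr_minus_divide)

locale nonuniform_poly_dichotomy =
  fixes T :: "real \<Rightarrow> real \<Rightarrow> real ^ 'd ^ 'd" and N :: "real ^ 'd \<Rightarrow> real"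
    and P :: "real \<Rightarrow> real ^ 'd ^ 'd" and K a lam \<epsilon> :: real
  assumes N_norm: "is_norm N"
    and cocycle: "\<And>\<tau> t s. \<tau> \<ge> 1 \<Longrightarrow> t \<ge> 1 \<Longrightarrow> s \<ge> 1 \<Longrightarrow> T \<tau> t ** T t s = T \<tau> s"
    and T_id: "\<And>t. t \<ge> 1 \<Longrightarrow> T t t = mat 1"
    and K_pos: "K > 0" and lam_pos: "0 < lam" and lam_le_a: "lam \<le> a" and eps_nonneg: "0 \<le> \<epsilon>"
    and projection: "\<And>t. t \<ge> 1 \<Longrightarrow> P t ** P t = P t"
    and invariance: "\<And>t s. 1 \<le> s \<Longrightarrow> s \<le> t \<Longrightarrow> P t ** T t s = T t s ** P s"
    and stable_bound: "\<And>t s x. 1 \<le> s \<Longrightarrow> s \<le> t \<Longrightarrow>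
      N (T t s *v (P s *v x)) \<le> K * (t / s) powr (- lam) * s powr \<epsilon> * N x"
    and unstable_bound: "\<And>t s x. 1 \<le> s \<Longrightarrow> s \<le> t \<Longrightarrow>
      N (T s t *v ((mat 1 - P t) *v x)) \<le> K * (t / s) powr (- lam) * t powr \<epsilon> * N x"
    and forward_bound: "\<And>t s x. 1 \<le> s \<Longrightarrow> s \<le> t \<Longrightarrow>
      N (T t s *v x) \<le> K * (t / s) powr a * s powr \<epsilon> * N x"
    and backward_bound: "\<And>t s x. 1 \<le> s \<Longrightarrow> s \<le> t \<Longrightarrow>
      N (T s t *v x) \<le> K * (t / s) powr a * t powr \<epsilon> * N x"
begin

lemmas N_nonneg = is_norm_nonneg[OF N_norm]
  and N_zero = is_norm_zero[OF N_norm]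
  and N_scaleR = is_norm_scaleR[OF N_norm]
  and N_triangle = is_norm_triangle[OF N_norm]

abbreviation Q :: "real \<Rightarrow> real ^ 'd ^ 'd" where
  "Q t \<equiv> mat 1 - P t"

abbreviation weight :: "real \<Rightarrow> real" where
  "weight \<equiv> poly_weight lam a"

lemma cocycle_apply: "\<tau> \<ge> 1 \<Longrightarrow> t \<ge> 1 \<Longrightarrow> s \<ge> 1 \<Longrightarrow> T \<tau> t *v (T t s *v x) = T \<tau> s *v x"
  using cocycle by (simp add: matrix_vector_mul_assoc)

lemma P_idem_apply: "t \<ge> 1 \<Longrightarrow> P t *v (P t *v x) = P t *v x"
  using projection by (simp add: matrix_vector_mul_assoc)

lemma Q_P_apply: "t \<ge> 1 \<Longrightarrow> Q t *v (P t *v x) = 0"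
  using P_idem_apply by (simp add: matrix_vector_mult_diff_rdistrib)

lemma P_Q_apply: "t \<ge> 1 \<Longrightarrow> P t *v (Q t *v x) = 0"
  using P_idem_apply[of t x] by (simp add: matrix_vector_mult_diff_distrib matrix_vector_mult_diff_rdistrib)

lemma Q_idem_apply: "t \<ge> 1 \<Longrightarrow> Q t *v (Q t *v x) = Q t *v x"
  using P_idem_apply by (simp add: matrix_vector_mult_diff_distrib matrix_vector_mult_diff_rdistrib)

lemma P_plus_Q_apply: "P t *v x + Q t *v x = x"
  by (simp add: matrix_vector_mult_diff_rdistrib)

lemma P_commute_apply:
  assumes "t \<ge> 1" "s \<ge> 1"
  shows "P t *v (T t s *v x) = T t s *v (P s *v x)"
proof (cases "s \<le> t")
  case True
  then show ?thesis using invariance[OF \<open>s \<ge> 1\<close>] by (simp add: matrix_vector_mul_assoc)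
next
  case False
  \<comment> \<open>invariance is only assumed forward in time; conjugate with \<open>T s t\<close>, the inverse of \<open>T t s\<close>\<close>
  have "P t *v (T t s *v x) = T t s *v (T s t *v (P t *v (T t s *v x)))"
    using cocycle_apply[of t s t] T_id assms by simp
  also have "\<dots> = T t s *v (P s *v (T s t *v (T t s *v x)))"
    using invariance[of t s] assms False by (metis linorder_not_le less_imp_le matrix_vector_mul_assoc)
  also have "\<dots> = T t s *v (P s *v x)"
    using cocycle_apply[of s t s] T_id assms by simp
  finally show ?thesis .
qed

lemma Q_commute_apply: "t \<ge> 1 \<Longrightarrow> s \<ge> 1 \<Longrightarrow> Q t *v (T t s *v x) = T t s *v (Q s *v x)"
  using P_commute_apply by (simp add: matrix_vector_mult_diff_rdistrib matrix_vector_mult_diff_distrib)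

lemma norm_P_le: "t \<ge> 1 \<Longrightarrow> N (P t *v x) \<le> K * t powr \<epsilon> * N x"
  using stable_bound[of t t x] T_id by simp

lemma norm_Q_le:
  assumes "t \<ge> 1"
  shows "N (Q t *v x) \<le> (1 + K) * t powr \<epsilon> * N x"
proof -
  have "Q t *v x = x + (-1) *\<^sub>R (P t *v x)" by (simp add: matrix_vector_mult_diff_rdistrib)
  then have "N (Q t *v x) \<le> N x + N (P t *v x)"
    using N_triangle N_scaleR[of "-1"] by (metis abs_minus_cancel abs_one mult_1)
  moreover have "N x \<le> t powr \<epsilon> * N x"
    using mult_right_mono[OF ge_one_powr_ge_zero[OF \<open>t \<ge> 1\<close> eps_nonneg] N_nonneg]
    by simp
  ultimately show ?thesis using norm_P_le[OF \<open>t \<ge> 1\<close>, of x] by (simp add: algebra_simps)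
qed

lemma growth_bound_le:
  assumes "t \<ge> 1"
  shows "K * t powr \<epsilon> * N x \<le> K * (1 + K) * t powr (2 * \<epsilon>) * N x"
    and "K * K * t powr (2 * \<epsilon>) * N x \<le> K * (1 + K) * t powr (2 * \<epsilon>) * N x"
proof -
  have "t powr \<epsilon> \<le> t powr (2 * \<epsilon>)" using assms eps_nonneg by (intro powr_mono) auto
  moreover have "1 \<le> t powr (2 * \<epsilon>)" using assms eps_nonneg by (simp add: ge_one_powr_ge_zero)
  ultimately have "K * t powr \<epsilon> \<le> K * (1 + K) * t powr (2 * \<epsilon>)"
    using K_pos by (simp add: algebra_simps mult_left_mono add_increasing2)
  then show "K * t powr \<epsilon> * N x \<le> K * (1 + K) * t powr (2 * \<epsilon>) * N x"
    using N_nonneg by (simp add: mult_right_mono)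
  show "K * K * t powr (2 * \<epsilon>) * N x \<le> K * (1 + K) * t powr (2 * \<epsilon>) * N x"
    using K_pos N_nonneg[of x] assms
    by (intro mult_right_mono mult_left_mono) simp_all
qed

lemma stable_part_le:
  assumes "t \<ge> 1" "\<tau> \<ge> 1"
  shows "N (T \<tau> t *v (P t *v x)) * weight (\<tau> / t) \<le> K * (1 + K) * t powr (2 * \<epsilon>) * N x"
proof -
  have "0 < \<tau> / t" "0 \<le> weight (\<tau> / t)"
    using assms by (simp_all add: poly_weight_nonneg)
  consider "t \<le> \<tau>" | "\<tau> \<le> t" by linarith
  then show ?thesis
  proof cases
    case 1
    have "N (T \<tau> t *v (P t *v x)) \<le> (K * t powr \<epsilon> * N x) * (\<tau> / t) powr (- lam)"
      using stable_bound[OF \<open>t \<ge> 1\<close> 1, of x] by (simp add: mult_ac)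
    then have "N (T \<tau> t *v (P t *v x)) * weight (\<tau> / t) \<le> K * t powr \<epsilon> * N x"
      using \<open>0 < \<tau> / t\<close> \<open>0 \<le> weight (\<tau> / t)\<close> poly_weight_le_powr(1) K_pos N_nonneg
      by (intro mult_le_of_powr_bounds) simp_all
    then show ?thesis using growth_bound_le(1)[OF \<open>t \<ge> 1\<close>, of x] by linarith
  next
    case 2
    have "N (T \<tau> t *v (P t *v x)) \<le> K * (t / \<tau>) powr a * t powr \<epsilon> * N (P t *v x)"
      by (rule backward_bound[OF \<open>\<tau> \<ge> 1\<close> 2])
    also have "\<dots> \<le> K * (t / \<tau>) powr a * t powr \<epsilon> * (K * t powr \<epsilon> * N x)"
      using norm_P_le[OF \<open>t \<ge> 1\<close>] K_pos by (simp add: mult_left_mono)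
    also have "\<dots> = (K * K * t powr (2 * \<epsilon>) * N x) * (\<tau> / t) powr (- a)"
      using \<open>t \<ge> 1\<close> by (simp add: divide_powr_flip[of t \<tau>] powr_add[symmetric] mult_ac)
    finally have "N (T \<tau> t *v (P t *v x)) * weight (\<tau> / t) \<le> K * K * t powr (2 * \<epsilon>) * N x"
      using \<open>0 < \<tau> / t\<close> \<open>0 \<le> weight (\<tau> / t)\<close> poly_weight_le_powr(2) K_pos N_nonneg
      by (intro mult_le_of_powr_bounds) simp_all
    then show ?thesis using growth_bound_le(2)[OF \<open>t \<ge> 1\<close>, of x] by linarith
  qed
qed

lemma unstable_part_le:
  assumes "t \<ge> 1" "\<tau> \<ge> 1"
  shows "N (T \<tau> t *v (Q t *v x)) * weight (t / \<tau>) \<le> K * (1 + K) * t powr (2 * \<epsilon>) * N x"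
proof -
  have "0 < t / \<tau>" "0 \<le> weight (t / \<tau>)"
    using assms by (simp_all add: poly_weight_nonneg)
  consider "t \<le> \<tau>" | "\<tau> \<le> t" by linarith
  then show ?thesis
  proof cases
    case 1
    have "N (T \<tau> t *v (Q t *v x)) \<le> K * (\<tau> / t) powr a * t powr \<epsilon> * N (Q t *v x)"
      by (rule forward_bound[OF \<open>t \<ge> 1\<close> 1])
    also have "\<dots> \<le> K * (\<tau> / t) powr a * t powr \<epsilon> * ((1 + K) * t powr \<epsilon> * N x)"
      using norm_Q_le[OF \<open>t \<ge> 1\<close>] K_pos by (simp add: mult_left_mono)
    also have "\<dots> = (K * (1 + K) * t powr (2 * \<epsilon>) * N x) * (t / \<tau>) powr (- a)"
      using \<open>t \<ge> 1\<close> by (simp add: divide_powr_flip[of \<tau> t] powr_add[symmetric] mult_ac)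
    finally show ?thesis
      using \<open>0 < t / \<tau>\<close> \<open>0 \<le> weight (t / \<tau>)\<close> poly_weight_le_powr(2) K_pos N_nonneg
      by (intro mult_le_of_powr_bounds) simp_all
  next
    case 2
    have "N (T \<tau> t *v (Q t *v x)) \<le> (K * t powr \<epsilon> * N x) * (t / \<tau>) powr (- lam)"
      using unstable_bound[OF \<open>\<tau> \<ge> 1\<close> 2, of x] by (simp add: mult_ac)
    then have "N (T \<tau> t *v (Q t *v x)) * weight (t / \<tau>) \<le> K * t powr \<epsilon> * N x"
      using \<open>0 < t / \<tau>\<close> \<open>0 \<le> weight (t / \<tau>)\<close> poly_weight_le_powr(1) K_pos N_nonneg
      by (intro mult_le_of_powr_bounds) simp_all
    then show ?thesis using growth_bound_le(1)[OF \<open>t \<ge> 1\<close>, of x] by linarith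
  qed
qed

definition lyap_weight :: "real \<Rightarrow> real ^ 'd \<Rightarrow> real \<Rightarrow> real" where
  "lyap_weight t x \<tau> =
    N (T \<tau> t *v (P t *v x)) * weight (\<tau> / t) + N (T \<tau> t *v (Q t *v x)) * weight (t / \<tau>)"

definition lyap_norm :: "real \<Rightarrow> real ^ 'd \<Rightarrow> real" where
  "lyap_norm t x = (SUP \<tau>\<in>{1..}. lyap_weight t x \<tau>)"

lemma lyap_weight_le:
  assumes "t \<ge> 1" "\<tau> \<ge> 1"
  shows "lyap_weight t x \<tau> \<le> 2 * K * (1 + K) * t powr (2 * \<epsilon>) * N x"
  unfolding lyap_weight_def using stable_part_le[OF assms, of x] unstable_part_le[OF assms, of x]
  by linarith

lemma bdd_above_lyap_weight: "t \<ge> 1 \<Longrightarrow> bdd_above (lyap_weight t x ` {1..})"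
  by (rule bdd_aboveI2[where M = "2 * K * (1 + K) * t powr (2 * \<epsilon>) * N x"])
     (simp add: lyap_weight_le)

lemma lyap_weight_at_self:
  assumes "t \<ge> 1"
  shows "N x \<le> lyap_weight t x t"
proof -
  have "T t t = mat 1" "t / t = 1" using T_id assms by auto
  have "N x \<le> N (P t *v x) + N (Q t *v x)"
    using N_triangle[of "P t *v x" "Q t *v x"] by (simp only: P_plus_Q_apply)
  then show ?thesis
    unfolding lyap_weight_def \<open>T t t = mat 1\<close> \<open>t / t = 1\<close> matrix_vector_mul_lid poly_weight_one
    by simp
qed

lemma lyap_norm_le: "t \<ge> 1 \<Longrightarrow> lyap_norm t x \<le> 2 * K * (1 + K) * t powr (2 * \<epsilon>) * N x"
  unfolding lyap_norm_def by (rule cSUP_least) (simp_all add: lyap_weight_le)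

lemma norm_le_lyap_norm:
  assumes "t \<ge> 1"
  shows "N x \<le> lyap_norm t x"
  unfolding lyap_norm_def
  by (rule cSUP_upper2[OF bdd_above_lyap_weight[OF assms] _ lyap_weight_at_self[OF assms]])
     (use assms in simp)

lemma is_norm_lyap_norm:
  assumes "t \<ge> 1"
  shows "is_norm (lyap_norm t)"
  unfolding lyap_norm_def
proof (rule is_norm_SUP[OF N_norm])
  show "\<exists>\<tau>\<in>{1..}. N x \<le> lyap_weight t x \<tau>" for x
    using lyap_weight_at_self[OF assms] assms by auto
  show "lyap_weight t (c *\<^sub>R x) \<tau> = \<bar>c\<bar> * lyap_weight t x \<tau>" for \<tau> c x
    unfolding lyap_weight_def matrix_vector_mult_scaleR N_scaleR
    by (simp only: distrib_left mult.assoc)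
  show "lyap_weight t (x + y) \<tau> \<le> lyap_weight t x \<tau> + lyap_weight t y \<tau>" for \<tau> x y
  proof -
    have triangle: "N (u + v) * weight r \<le> N u * weight r + N v * weight r" for u v r
      using mult_right_mono[OF N_triangle[of u v] poly_weight_nonneg]
      by (simp add: distrib_right)
    show ?thesis
      unfolding lyap_weight_def matrix_vector_right_distrib
      using triangle[of "T \<tau> t *v (P t *v x)" "T \<tau> t *v (P t *v y)" "\<tau> / t"]
        triangle[of "T \<tau> t *v (Q t *v x)" "T \<tau> t *v (Q t *v y)" "t / \<tau>"]
      by linarith
  qed
qed (use bdd_above_lyap_weight[OF assms] in auto)

lemma weight_le_shift_decay:
  assumes "1 \<le> \<rho>" "0 < r"
  shows "weight r \<le> \<rho> powr (- lam) * weight (\<rho> * r)"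
proof -
  have "\<rho> powr (- lam) * (\<rho> powr lam * weight r) \<le> \<rho> powr (- lam) * weight (\<rho> * r)"
    using poly_weight_mult_ge[OF lam_le_a assms] by (simp add: mult_left_mono)
  moreover have "\<rho> powr (- lam) * (\<rho> powr lam * weight r) = weight r"
    using assms(1) by (simp add: powr_minus)
  ultimately show ?thesis by simp
qed

lemma weight_le_shift_growth:
  assumes "1 \<le> \<rho>" "0 < r"
  shows "weight r \<le> \<rho> powr a * weight (\<rho> * r)"
proof -
  have "\<rho> powr (- lam) \<le> \<rho> powr a"
    using assms(1) lam_pos lam_le_a by (intro powr_mono) auto
  then show ?thesis
    using weight_le_shift_decay[OF assms] poly_weight_nonneg[of lam a "\<rho> * r"]
    by (meson mult_right_mono order_trans)
qed

lemma lyap_weight_transport: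
  assumes "\<tau> \<ge> 1" "t \<ge> 1" "s \<ge> 1"
  shows "lyap_weight t (T t s *v v) \<tau> =
    N (T \<tau> s *v (P s *v v)) * weight (\<tau> / t) + N (T \<tau> s *v (Q s *v v)) * weight (t / \<tau>)"
  unfolding lyap_weight_def P_commute_apply[OF assms(2,3)] Q_commute_apply[OF assms(2,3)]
    cocycle_apply[OF assms] ..

lemma lyap_norm_le_of_weight_le:
  assumes "q \<ge> 1" "0 \<le> c" "\<And>\<tau>. \<tau> \<ge> 1 \<Longrightarrow> lyap_weight r y \<tau> \<le> c * lyap_weight q x \<tau>"
  shows "lyap_norm r y \<le> c * lyap_norm q x"
  unfolding lyap_norm_def
  by (rule cSUP_le_mult[OF _ bdd_above_lyap_weight[OF assms(1)] assms(2)]) (simp_all add: assms(3))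

lemma weighted_sum_le:
  fixes n1 n2 :: real
  assumes "0 \<le> n1" "0 \<le> n2" "w1 \<le> c * v1" "w2 \<le> c * v2"
  shows "n1 * w1 + n2 * w2 \<le> c * (n1 * v1 + n2 * v2)"
  using mult_left_mono[OF assms(3,1)] mult_left_mono[OF assms(4,2)] by (simp add: algebra_simps)

lemma lyap_norm_stable:
  assumes "1 \<le> s" "s \<le> t"
  shows "lyap_norm t (T t s *v (P s *v x)) \<le> (t / s) powr (- lam) * lyap_norm s x"
proof (rule lyap_norm_le_of_weight_le[OF assms(1)])
  fix \<tau> :: real assume "\<tau> \<ge> 1"
  have "t \<ge> 1" "t / s * (\<tau> / t) = \<tau> / s" using assms by auto
  let ?n = "N (T \<tau> s *v (P s *v x))"
  have "lyap_weight t (T t s *v (P s *v x)) \<tau> = ?n * weight (\<tau> / t)"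
    unfolding lyap_weight_transport[OF \<open>\<tau> \<ge> 1\<close> \<open>t \<ge> 1\<close> assms(1)]
      P_idem_apply[OF assms(1)] Q_P_apply[OF assms(1)]
    by (simp add: N_zero)
  also have "\<dots> \<le> ?n * ((t / s) powr (- lam) * weight (\<tau> / s))"
    using weight_le_shift_decay[of "t / s" "\<tau> / t"] assms \<open>\<tau> \<ge> 1\<close> \<open>t / s * (\<tau> / t) = \<tau> / s\<close>
    by (intro mult_left_mono N_nonneg) simp
  also have "\<dots> \<le> (t / s) powr (- lam) * lyap_weight s x \<tau>"
    unfolding lyap_weight_def
    using N_nonneg poly_weight_nonneg by (simp add: algebra_simps)
  finally show "lyap_weight t (T t s *v (P s *v x)) \<tau> \<le> (t / s) powr (- lam) * lyap_weight s x \<tau>" .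
qed simp

lemma lyap_norm_unstable:
  assumes "1 \<le> s" "s \<le> t"
  shows "lyap_norm s (T s t *v (Q t *v x)) \<le> (t / s) powr (- lam) * lyap_norm t x"
proof (rule lyap_norm_le_of_weight_le)
  show "t \<ge> 1" using assms by simp
  fix \<tau> :: real assume "\<tau> \<ge> 1"
  have "t / s * (s / \<tau>) = t / \<tau>" using assms by auto
  let ?n = "N (T \<tau> t *v (Q t *v x))"
  have "lyap_weight s (T s t *v (Q t *v x)) \<tau> = ?n * weight (s / \<tau>)"
    unfolding lyap_weight_transport[OF \<open>\<tau> \<ge> 1\<close> assms(1) \<open>t \<ge> 1\<close>]
      P_Q_apply[OF \<open>t \<ge> 1\<close>] Q_idem_apply[OF \<open>t \<ge> 1\<close>]
    by (simp add: N_zero)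
  also have "\<dots> \<le> ?n * ((t / s) powr (- lam) * weight (t / \<tau>))"
    using weight_le_shift_decay[of "t / s" "s / \<tau>"] assms \<open>\<tau> \<ge> 1\<close> \<open>t / s * (s / \<tau>) = t / \<tau>\<close>
    by (intro mult_left_mono N_nonneg) simp
  also have "\<dots> \<le> (t / s) powr (- lam) * lyap_weight t x \<tau>"
    unfolding lyap_weight_def
    using N_nonneg poly_weight_nonneg by (simp add: algebra_simps)
  finally show "lyap_weight s (T s t *v (Q t *v x)) \<tau> \<le> (t / s) powr (- lam) * lyap_weight t x \<tau>" .
qed simp

lemma lyap_norm_forward:
  assumes "1 \<le> s" "s \<le> t"
  shows "lyap_norm t (T t s *v x) \<le> (t / s) powr a * lyap_norm s x"
proof (rule lyap_norm_le_of_weight_le[OF assms(1)])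
  fix \<tau> :: real assume "\<tau> \<ge> 1"
  have "t \<ge> 1" "t / s * (\<tau> / t) = \<tau> / s" "t / s * (s / \<tau>) = t / \<tau>" using assms by auto
  have "weight (\<tau> / t) \<le> (t / s) powr a * weight (\<tau> / s)"
    using weight_le_shift_growth[of "t / s" "\<tau> / t"] assms \<open>\<tau> \<ge> 1\<close> \<open>t / s * (\<tau> / t) = \<tau> / s\<close>
    by simp
  moreover have "weight (t / \<tau>) \<le> (t / s) powr a * weight (s / \<tau>)"
    using poly_weight_mult_le[OF lam_le_a, of "t / s" "s / \<tau>"] assms \<open>\<tau> \<ge> 1\<close>
      \<open>t / s * (s / \<tau>) = t / \<tau>\<close>
    by simp
  ultimately show "lyap_weight t (T t s *v x) \<tau> \<le> (t / s) powr a * lyap_weight s x \<tau>"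
    unfolding lyap_weight_transport[OF \<open>\<tau> \<ge> 1\<close> \<open>t \<ge> 1\<close> assms(1)] unfolding lyap_weight_def
    by (intro weighted_sum_le N_nonneg)
qed simp

lemma lyap_norm_backward:
  assumes "1 \<le> s" "s \<le> t"
  shows "lyap_norm s (T s t *v x) \<le> (t / s) powr a * lyap_norm t x"
proof (rule lyap_norm_le_of_weight_le)
  show "t \<ge> 1" using assms by simp
  fix \<tau> :: real assume "\<tau> \<ge> 1"
  have "t / s * (\<tau> / t) = \<tau> / s" "t / s * (s / \<tau>) = t / \<tau>" using assms by auto
  have "weight (\<tau> / s) \<le> (t / s) powr a * weight (\<tau> / t)"
    using poly_weight_mult_le[OF lam_le_a, of "t / s" "\<tau> / t"] assms \<open>\<tau> \<ge> 1\<close>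
      \<open>t / s * (\<tau> / t) = \<tau> / s\<close>
    by simp
  moreover have "weight (s / \<tau>) \<le> (t / s) powr a * weight (t / \<tau>)"
    using weight_le_shift_growth[of "t / s" "s / \<tau>"] assms \<open>\<tau> \<ge> 1\<close> \<open>t / s * (s / \<tau>) = t / \<tau>\<close>
    by simp
  ultimately show "lyap_weight s (T s t *v x) \<tau> \<le> (t / s) powr a * lyap_weight t x \<tau>"
    unfolding lyap_weight_transport[OF \<open>\<tau> \<ge> 1\<close> assms(1) \<open>t \<ge> 1\<close>] unfolding lyap_weight_def
    by (intro weighted_sum_le N_nonneg)
qed simp

lemma strong_poly_dichotomy_wrt_lyap_norm: "strong_poly_dichotomy_wrt lyap_norm T"
  unfolding strong_poly_dichotomy_wrt_def
proof (rule exI[of _ 1], rule exI[of _ a], rule exI[of _ lam], rule exI[of _ P], intro conjI allI impI)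
  fix t s :: real assume "1 \<le> s \<and> s \<le> t"
  then have "1 \<le> s" "s \<le> t" by auto
  show "P t ** T t s = T t s ** P s" by (rule invariance) fact+
  show "lyap_norm t (T t s ** P s *v x) \<le> 1 * (t / s) powr (- lam) * lyap_norm s x" for x
    using lyap_norm_stable[OF \<open>1 \<le> s\<close> \<open>s \<le> t\<close>] by (simp add: matrix_vector_mul_assoc)
  show "lyap_norm s (T s t ** Q t *v x) \<le> 1 * (t / s) powr (- lam) * lyap_norm t x" for x
    using lyap_norm_unstable[OF \<open>1 \<le> s\<close> \<open>s \<le> t\<close>] by (simp add: matrix_vector_mul_assoc)
  show "lyap_norm t (T t s *v x) \<le> 1 * (t / s) powr a * lyap_norm s x" for x
    using lyap_norm_forward[OF \<open>1 \<le> s\<close> \<open>s \<le> t\<close>] by simp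
  show "lyap_norm s (T s t *v x) \<le> 1 * (t / s) powr a * lyap_norm t x" for x
    using lyap_norm_backward[OF \<open>1 \<le> s\<close> \<open>s \<le> t\<close>] by simp
qed (use lam_pos lam_le_a projection in auto)

end

section \<open>Nonuniform dichotomies and families of norms\<close>

lemma op_norm_le_imp_bound:
  fixes N :: "real ^ 'd \<Rightarrow> real"
  assumes "is_norm N" "op_norm N M \<le> B"
  shows "N (M *v x) \<le> B * N x"
  using op_norm_bound[OF assms(1)] mult_right_mono[OF assms(2) is_norm_nonneg[OF assms(1)]]
  by (rule order_trans)

lemma op_norm_le_of_comparable_norms:
  fixes N :: "real ^ 'd \<Rightarrow> real"
  assumes "is_norm N" "0 \<le> c" "0 \<le> D"
    and "\<And>x. N x \<le> S' x" "\<And>x. S x \<le> D * N x" "\<And>x. S' (M *v x) \<le> c * S x"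
  shows "op_norm N M \<le> c * D"
proof (rule op_norm_le[OF assms(1)])
  show "0 \<le> c * D" using assms(2,3) by simp
  fix x
  have "N (M *v x) \<le> c * S x" using assms(4,6) order_trans by blast
  also have "\<dots> \<le> c * (D * N x)" using assms(2,5) by (rule mult_left_mono[rotated])
  finally show "N (M *v x) \<le> c * D * N x" by (simp add: mult_ac)
qed

lemma nonuniform_dichotomy_of_dichotomy_wrt:
  fixes N :: "real ^ 'd \<Rightarrow> real"
  assumes N: "is_norm N" and D: "strong_poly_dichotomy_wrt S T" and "C > 0" "\<delta> \<ge> 0"
    and comparable: "\<forall>t x. t \<ge> 1 \<longrightarrow> N x \<le> S t x \<and> S t x \<le> C * t powr \<delta> * N x"
  shows "nonuniform_strong_poly_dichotomy N T"
proof -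
  obtain K a lam P where "K > 0" "a \<ge> lam" "lam > 0" "\<forall>t\<ge>1. P t ** P t = P t"
    and bounds: "\<And>t s. 1 \<le> s \<and> s \<le> t \<Longrightarrow>
       P t ** T t s = T t s ** P s \<and>
       (\<forall>x. S t (T t s ** P s *v x) \<le> K * (t / s) powr (- lam) * S s x) \<and>
       (\<forall>x. S s (T s t ** (mat 1 - P t) *v x) \<le> K * (t / s) powr (- lam) * S t x) \<and>
       (\<forall>x. S t (T t s *v x) \<le> K * (t / s) powr a * S s x) \<and>
       (\<forall>x. S s (T s t *v x) \<le> K * (t / s) powr a * S t x)"
    using D unfolding strong_poly_dichotomy_wrt_def by blast
  have transfer: "op_norm N M \<le> K * c * (C * r powr \<delta>)"
    if "0 \<le> c" "r \<ge> 1" "q \<ge> 1" "\<And>x. S q (M *v x) \<le> K * c * S r x" for M c r q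
    using comparable that \<open>K > 0\<close> \<open>C > 0\<close>
    by (intro op_norm_le_of_comparable_norms[OF N, where S' = "S q" and S = "S r"]) auto
  show ?thesis
    unfolding nonuniform_strong_poly_dichotomy_def
  proof (rule exI[of _ "K * C"], rule exI[of _ a], rule exI[of _ lam], rule exI[of _ \<delta>],
      rule exI[of _ P], intro conjI allI impI)
    fix t s :: real assume ts: "1 \<le> s \<and> s \<le> t"
    note b = bounds[OF ts]
    show "P t ** T t s = T t s ** P s" using b by blast
    show "op_norm N (T t s ** P s) \<le> K * C * (t / s) powr (- lam) * s powr \<delta>"
      using transfer[of "(t / s) powr (- lam)" s t] b ts by (simp add: mult_ac)
    show "op_norm N (T s t ** (mat 1 - P t)) \<le> K * C * (t / s) powr (- lam) * t powr \<delta>"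
      using transfer[of "(t / s) powr (- lam)" t s] b ts by (simp add: mult_ac)
    show "op_norm N (T t s) \<le> K * C * (t / s) powr a * s powr \<delta>"
      using transfer[of "(t / s) powr a" s t] b ts by (simp add: mult_ac)
    show "op_norm N (T s t) \<le> K * C * (t / s) powr a * t powr \<delta>"
      using transfer[of "(t / s) powr a" t s] b ts by (simp add: mult_ac)
  qed (use \<open>K > 0\<close> \<open>C > 0\<close> \<open>a \<ge> lam\<close> \<open>lam > 0\<close> \<open>\<delta> \<ge> 0\<close> \<open>\<forall>t\<ge>1. P t ** P t = P t\<close> in auto)
qed

lemma nonuniform_strong_poly_dichotomyE:
  fixes N :: "real ^ 'd \<Rightarrow> real"
  assumes N: "is_norm N"
    and cocycle: "\<And>\<tau> t s. \<tau> \<ge> 1 \<Longrightarrow> t \<ge> 1 \<Longrightarrow> s \<ge> 1 \<Longrightarrow> T \<tau> t ** T t s = T \<tau> s"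
    and T_id: "\<And>t. t \<ge> 1 \<Longrightarrow> T t t = mat 1"
    and D: "nonuniform_strong_poly_dichotomy N T"
  obtains P K a lam \<epsilon> where "nonuniform_poly_dichotomy T N P K a lam \<epsilon>"
proof -
  obtain K a lam \<epsilon> P where "K > 0" "a \<ge> lam" "lam > 0" "\<epsilon> \<ge> 0"
    and "\<And>t. t \<ge> 1 \<Longrightarrow> P t ** P t = P t"
    and "\<And>t s. 1 \<le> s \<Longrightarrow> s \<le> t \<Longrightarrow> P t ** T t s = T t s ** P s"
    and stable: "\<And>t s. 1 \<le> s \<Longrightarrow> s \<le> t \<Longrightarrow>
      op_norm N (T t s ** P s) \<le> K * (t / s) powr (- lam) * s powr \<epsilon>"
    and unstable: "\<And>t s. 1 \<le> s \<Longrightarrow> s \<le> t \<Longrightarrow>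
      op_norm N (T s t ** (mat 1 - P t)) \<le> K * (t / s) powr (- lam) * t powr \<epsilon>"
    and forward: "\<And>t s. 1 \<le> s \<Longrightarrow> s \<le> t \<Longrightarrow>
      op_norm N (T t s) \<le> K * (t / s) powr a * s powr \<epsilon>"
    and backward: "\<And>t s. 1 \<le> s \<Longrightarrow> s \<le> t \<Longrightarrow>
      op_norm N (T s t) \<le> K * (t / s) powr a * t powr \<epsilon>"
    using D unfolding nonuniform_strong_poly_dichotomy_def by blast
  have "nonuniform_poly_dichotomy T N P K a lam \<epsilon>"
  proof
    fix t s :: real and x :: "real ^ 'd" assume "1 \<le> s" "s \<le> t"
    show "N (T t s *v (P s *v x)) \<le> K * (t / s) powr (- lam) * s powr \<epsilon> * N x"
      using op_norm_le_imp_bound[OF N stable, of s t x] \<open>1 \<le> s\<close> \<open>s \<le> t\<close>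
      by (simp add: matrix_vector_mul_assoc)
    show "N (T s t *v ((mat 1 - P t) *v x)) \<le> K * (t / s) powr (- lam) * t powr \<epsilon> * N x"
      using op_norm_le_imp_bound[OF N unstable, of s t x] \<open>1 \<le> s\<close> \<open>s \<le> t\<close>
      by (simp add: matrix_vector_mul_assoc)
    show "N (T t s *v x) \<le> K * (t / s) powr a * s powr \<epsilon> * N x"
      using op_norm_le_imp_bound[OF N forward, of s t x] \<open>1 \<le> s\<close> \<open>s \<le> t\<close> by simp
    show "N (T s t *v x) \<le> K * (t / s) powr a * t powr \<epsilon> * N x"
      using op_norm_le_imp_bound[OF N backward, of s t x] \<open>1 \<le> s\<close> \<open>s \<le> t\<close> by simp
  qed fact+
  then show ?thesis by (rule that)
qed

lemma lyapunov_norms_of_nonuniform_dichotomy: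
  fixes N :: "real ^ 'd \<Rightarrow> real"
  assumes "is_norm N"
    and "\<And>\<tau> t s. \<tau> \<ge> 1 \<Longrightarrow> t \<ge> 1 \<Longrightarrow> s \<ge> 1 \<Longrightarrow> T \<tau> t ** T t s = T \<tau> s"
    and "\<And>t. t \<ge> 1 \<Longrightarrow> T t t = mat 1"
    and "nonuniform_strong_poly_dichotomy N T"
  shows "\<exists>S :: real \<Rightarrow> real ^ 'd \<Rightarrow> real.
    (\<forall>t\<ge>1. is_norm (S t)) \<and> strong_poly_dichotomy_wrt S T \<and>
    (\<exists>C \<delta>. C > 0 \<and> \<delta> \<ge> 0 \<and> (\<forall>t x. t \<ge> 1 \<longrightarrow> N x \<le> S t x \<and> S t x \<le> C * t powr \<delta> * N x))"
proof -
  obtain P K a lam \<epsilon> where "nonuniform_poly_dichotomy T N P K a lam \<epsilon>"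
    using nonuniform_strong_poly_dichotomyE[OF assms] by blast
  then interpret nonuniform_poly_dichotomy T N P K a lam \<epsilon> .
  show ?thesis
  proof (intro exI[of _ lyap_norm] conjI)
    show "\<forall>t\<ge>1. is_norm (lyap_norm t)" using is_norm_lyap_norm by blast
    show "strong_poly_dichotomy_wrt lyap_norm T" by (rule strong_poly_dichotomy_wrt_lyap_norm)
    show "\<exists>C \<delta>. C > 0 \<and> \<delta> \<ge> 0 \<and>
        (\<forall>t x. t \<ge> 1 \<longrightarrow> N x \<le> lyap_norm t x \<and> lyap_norm t x \<le> C * t powr \<delta> * N x)"
    proof -
      have "2 * K * (1 + K) > 0" "2 * \<epsilon> \<ge> 0"
        using K_pos eps_nonneg by (simp_all add: add_pos_pos)
      moreover have "\<forall>t x. t \<ge> 1 \<longrightarrow>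
          N x \<le> lyap_norm t x \<and> lyap_norm t x \<le> 2 * K * (1 + K) * t powr (2 * \<epsilon>) * N x"
        using norm_le_lyap_norm lyap_norm_le by blast
      ultimately show ?thesis by blast
    qed
  qed
qed

theorem proposition5p1:
  fixes A :: "real \<Rightarrow> real ^ 'd ^ 'd"
    and T :: "real \<Rightarrow> real \<Rightarrow> real ^ 'd ^ 'd"
    and N :: "real ^ 'd \<Rightarrow> real"
  assumes "continuous_on {1..} A"
    and "evolution_family A T"
    and "is_norm N"
  shows "nonuniform_strong_poly_dichotomy N T \<longleftrightarrow>
    (\<exists>S :: real \<Rightarrow> real ^ 'd \<Rightarrow> real.
        (\<forall>t\<ge>1. is_norm (S t)) \<and> strong_poly_dichotomy_wrt S T \<and>
        (\<exists>C \<delta>. C > 0 \<and> \<delta> \<ge> 0 \<and>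
           (\<forall>t x. t \<ge> 1 \<longrightarrow> N x \<le> S t x \<and> S t x \<le> C * t powr \<delta> * N x)))"
proof
  assume "nonuniform_strong_poly_dichotomy N T"
  with assms show "\<exists>S. (\<forall>t\<ge>1. is_norm (S t)) \<and> strong_poly_dichotomy_wrt S T \<and>
      (\<exists>C \<delta>. C > 0 \<and> \<delta> \<ge> 0 \<and> (\<forall>t x. t \<ge> 1 \<longrightarrow> N x \<le> S t x \<and> S t x \<le> C * t powr \<delta> * N x))"
    by (intro lyapunov_norms_of_nonuniform_dichotomy evolution_family_cocycle evolution_family_refl)
next
  assume "\<exists>S. (\<forall>t\<ge>1. is_norm (S t)) \<and> strong_poly_dichotomy_wrt S T \<and>
      (\<exists>C \<delta>. C > 0 \<and> \<delta> \<ge> 0 \<and> (\<forall>t x. t \<ge> 1 \<longrightarrow> N x \<le> S t x \<and> S t x \<le> C * t powr \<delta> * N x))"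
  with nonuniform_dichotomy_of_dichotomy_wrt[OF \<open>is_norm N\<close>]
  show "nonuniform_strong_poly_dichotomy N T" by blast
qed

end
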